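(* For $k\ge1$ let $\mu_{2k+5}$ be the permutation of $[2k+5]$ given as the sequence $$\mu_{2k+5}=2k+2,\ 2k+5,\ 2k+4,\ \underbrace{2k,\ 2k+3,\ 2k-2,\ 2k+1,\ \dots,\ 6,\ 9,\ 4,\ 7}_{\text{pairs }(2j,\,2j+3)\text{ for } j=k,k-1,\dots,2},\ 1,\ 5,\ 3,\ 2,$$ so that $\mu_7=4,7,6,1,5,3,2$, $\mu_9=6,9,8,4,7,1,5,3,2$, $\mu_{11}=8,11,10,6,9,4,7,1,5,3,2$. Let $U=\{\mu_7,\mu_9,\mu_{11},\dots\}$. Then $U$ is an antichain with respect to $\prec$. Moreover, $\{123,3214,2143,15432\}\cup U$ is an antichain with respect to $\prec$.
   Context: $\pi\prec\rho$ means $\rho$ (as a sequence) has a subsequence order-isomorphic to $\pi$ (same relative order of entries). Permutations like $3214$ are written in one-line notation. An antichain is a set of pairwise $\prec$-incomparable permutations. *)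

theory Defs
  imports Main "HOL-Library.Sublist"
begin

text \<open>Permutations are represented in one-line notation as lists of naturals.\<close>

definition order_iso :: "nat list \<Rightarrow> nat list \<Rightarrow> bool" where
  "order_iso xs ys \<longleftrightarrow> length xs = length ys \<and>
     (\<forall>i<length xs. \<forall>j<length xs. xs ! i < xs ! j \<longleftrightarrow> ys ! i < ys ! j)"

definition contains :: "nat list \<Rightarrow> nat list \<Rightarrow> bool" (infix "\<prec>" 50) where
  "p \<prec> r \<longleftrightarrow> (\<exists>s. subseq s r \<and> order_iso p s)"

definition antichain :: "nat list set \<Rightarrow> bool" where
  "antichain A \<longleftrightarrow> (\<forall>x\<in>A. \<forall>y\<in>A. x \<noteq> y \<longrightarrow> \<not> x \<prec> y)"

text \<open>mu k is the permutation mu_{2k+5} of the paper (k \<ge> 1).\<close>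
definition mu :: "nat \<Rightarrow> nat list" where
  "mu k = [2*k+2, 2*k+5, 2*k+4]
          @ concat (map (\<lambda>j. [2*j, 2*j+3]) (rev [2..<k+1]))
          @ [1, 5, 3, 2]"

lemma "mu 1 = [4,7,6,1,5,3,2]" "mu 2 = [6,9,8,4,7,1,5,3,2]"
      "mu 3 = [8,11,10,6,9,4,7,1,5,3,2]"
  by (simp_all add: mu_def upt_rec)

end

theory Submission
  imports Defs
begin

(* Join positions i < j of a permutation when its entry at i is the smaller one. An occurrence
   of pi in rho is a strictly increasing map of positions sending these noninversion edges to
   noninversion edges. For mu l (positions 0, ..., 2l+4) the graph is the path
   0, 4, 3, 6, 5, ..., 2l+2, 2l+1 of length 2l, with the leaves 1, 2 attached to 0 and
   2l+3, 2l+4 attached to 2l+1, every edge pointing to the right. Hence no edge is followed by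
   another one (so 123 is avoided), no vertex has four successors (15432), and two vertices
   share a successor only if it lies directly after the later one (3214, 2143). If mu k were
   contained in mu l with k < l, the only two vertices with three successors would have to go
   to 0 and 2l+1, so the path of length 2k joining them would become a walk of length 2k
   between two vertices at distance 2l. *)

lemma list_emb_index_map:
  "list_emb P xs ys \<Longrightarrow>
   \<exists>g. strict_mono_on {..<length xs} g \<and>
     (\<forall>i<length xs. g i < length ys \<and> P (xs ! i) (ys ! g i))"
proof (induction rule: list_emb.induct)
  case (list_emb_Nil ys)
  show ?case by (auto intro: strict_mono_onI)
next
  case (list_emb_Cons xs ys y)
  then obtain g where g: "strict_mono_on {..<length xs} g"
    "\<forall>i<length xs. g i < length ys \<and> P (xs ! i) (ys ! g i)" by blast
  show ?case
    by (rule exI[of _ "Suc \<circ> g"])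
      (use g in \<open>auto intro!: strict_mono_onI strict_mono_onD[OF g(1)]\<close>)
next
  case (list_emb_Cons2 x y xs ys)
  then obtain g where g: "strict_mono_on {..<length xs} g"
    "\<forall>i<length xs. g i < length ys \<and> P (xs ! i) (ys ! g i)" by blast
  define h where "h i = (case i of 0 \<Rightarrow> 0 | Suc i \<Rightarrow> Suc (g i))" for i
  have "strict_mono_on {..<length (x # xs)} h"
    by (intro strict_mono_onI) (auto simp: h_def split: nat.split intro!: strict_mono_onD[OF g(1)])
  moreover have "\<forall>i<length (x # xs). h i < length (y # ys) \<and> P ((x # xs) ! i) ((y # ys) ! h i)"
    using g(2) list_emb_Cons2.hyps(1) by (auto simp: h_def nth_Cons split: nat.split)
  ultimately show ?case by blast
qed

lemma length_concat_pairs: "length (concat (map (\<lambda>x. [f x, g x]) xs)) = 2 * length xs"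
  by (induction xs) auto

lemma nth_concat_pairs:
  "i < 2 * length xs \<Longrightarrow>
   concat (map (\<lambda>x. [f x, g x]) xs) ! i = (if even i then f (xs ! (i div 2)) else g (xs ! (i div 2)))"
proof (induction xs arbitrary: i)
  case (Cons x xs)
  then show ?case by (cases i; cases "i - 1") (auto simp: nth_Cons')
qed simp

lemma abs_diff_le_of_steps:
  fixes f :: "nat \<Rightarrow> 'a::linordered_idom"
  assumes "\<And>i. i < n \<Longrightarrow> \<bar>f (Suc i) - f i\<bar> \<le> 1"
  shows "\<bar>f n - f 0\<bar> \<le> of_nat n"
  using assms
proof (induction n)
  case (Suc n)
  have "\<bar>f (Suc n) - f 0\<bar> \<le> \<bar>f (Suc n) - f n\<bar> + \<bar>f n - f 0\<bar>"
    using abs_triangle_ineq[of "f (Suc n) - f n" "f n - f 0"] by simp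
  also have "\<dots> \<le> 1 + of_nat n"
    using Suc by (intro add_mono) auto
  finally show ?case by simp
qed simp

definition noninversion :: "nat list \<Rightarrow> nat \<Rightarrow> nat \<Rightarrow> bool" where
  "noninversion xs i j \<longleftrightarrow> i < j \<and> j < length xs \<and> xs ! i < xs ! j"

lemma contains_noninversion_map:
  assumes "p \<prec> r"
  obtains g where "strict_mono_on {..<length p} g"
    and "\<And>i j. noninversion p i j \<Longrightarrow> noninversion r (g i) (g j)"
proof -
  obtain s where s: "subseq s r" "order_iso p s"
    using assms unfolding contains_def by blast
  obtain g where g: "strict_mono_on {..<length s} g" "\<forall>i<length s. g i < length r \<and> s ! i = r ! g i"
    using list_emb_index_map[OF s(1)] by blast
  have len: "length s = length p"
    using s(2) unfolding order_iso_def by simp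
  have iso: "p ! i < p ! j \<longleftrightarrow> s ! i < s ! j" if "i < length p" "j < length p" for i j
    using s(2) that unfolding order_iso_def by blast
  show thesis
  proof (rule that)
    show "strict_mono_on {..<length p} g"
      using g(1) len by simp
  next
    fix i j assume ij: "noninversion p i j"
    then have "g i < g j"
      using len unfolding noninversion_def by (auto intro!: strict_mono_onD[OF g(1)])
    with ij show "noninversion r (g i) (g j)"
      using g(2) iso len unfolding noninversion_def by auto
  qed
qed

lemma contains_length_le: "p \<prec> r \<Longrightarrow> length p \<le> length r"
  unfolding contains_def order_iso_def using list_emb_length by fastforce

lemma contains_iff_subseqs: "p \<prec> r \<longleftrightarrow> (\<exists>s\<in>set (subseqs r). order_iso p s)"
  unfolding contains_def by auto

lemma order_iso_iff_list_all:
  "order_iso xs ys \<longleftrightarrow> length xs = length ys \<and>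
     list_all (\<lambda>i. list_all (\<lambda>j. xs ! i < xs ! j \<longleftrightarrow> ys ! i < ys ! j)
       [0..<length xs]) [0..<length xs]"
  unfolding order_iso_def list_all_iff by auto

lemma antichain_Un:
  assumes "antichain A" "antichain B"
    and "\<And>a b. a \<in> A \<Longrightarrow> b \<in> B \<Longrightarrow> \<not> a \<prec> b \<and> \<not> b \<prec> a"
  shows "antichain (A \<union> B)"
  using assms unfolding antichain_def by blast

lemma length_mu: "1 \<le> l \<Longrightarrow> length (mu l) = 2*l + 5"
  by (simp add: mu_def length_concat_pairs; arith)

lemma mu_nth_middle:
  assumes "t + 2 \<le> l"
  shows "mu l ! (2*t + 3) = 2*(l - t)" and "mu l ! (2*t + 4) = 2*(l - t) + 3"
proof -
  define C where "C = concat (map (\<lambda>j. [2*j, 2*j + 3]) (rev [2..<l+1]))"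
  have mu: "mu l = [2*l + 2, 2*l + 5, 2*l + 4] @ C @ [1, 5, 3, 2]"
    by (simp add: mu_def C_def)
  have len: "length C + 2 = 2*l"
    using assms by (simp add: C_def length_concat_pairs; arith)
  have "rev [2..<l+1] ! t = l - t"
    using assms by (simp add: rev_nth del: upt_Suc)
  then have "C ! (2*t) = 2*(l - t)" "C ! (2*t + 1) = 2*(l - t) + 3"
    using assms nth_concat_pairs[of _ "rev [2..<l+1]" "\<lambda>j. 2*j" "\<lambda>j. 2*j + 3"]
    unfolding C_def by (simp_all del: upt_Suc)
  moreover have "2*t + 1 < length C"
    using assms len by linarith
  then have "mu l ! (2*t + 3) = C ! (2*t)" "mu l ! (2*t + 4) = C ! (2*t + 1)"
    by (simp_all add: mu nth_append)
  ultimately show "mu l ! (2*t + 3) = 2*(l - t)" "mu l ! (2*t + 4) = 2*(l - t) + 3"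
    by simp_all
qed

lemma mu_nth_tail:
  assumes "1 \<le> l"
  shows "mu l ! (2*l + 1) = 1" "mu l ! (2*l + 2) = 5" "mu l ! (2*l + 3) = 3" "mu l ! (2*l + 4) = 2"
proof -
  define pre where
    "pre = [2*l + 2, 2*l + 5, 2*l + 4] @ concat (map (\<lambda>j. [2*j, 2*j + 3]) (rev [2..<l+1]))"
  have "mu l = pre @ [1, 5, 3, 2]"
    by (simp add: mu_def pre_def)
  moreover have "length pre = 2*l + 1"
    using assms by (simp add: pre_def length_concat_pairs; arith)
  ultimately have "mu l ! (2*l + 1 + i) = [1, 5, 3, 2] ! i" for i
    by (metis nth_append_length_plus)
  from this[of 0] this[of 1] this[of 2] this[of 3]
  show "mu l ! (2*l + 1) = 1" "mu l ! (2*l + 2) = 5" "mu l ! (2*l + 3) = 3" "mu l ! (2*l + 4) = 2"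
    by (simp_all add: numeral_eq_Suc)
qed

(* The middle entries are stated additively, free of truncated subtraction, so that the case
   analyses below reduce to linear arithmetic. *)
lemma mu_nth_cases:
  assumes "1 \<le> l" "p < 2*l + 5"
  obtains "p = 0" "mu l ! p = 2*l + 2"
  | "p = 1" "mu l ! p = 2*l + 5"
  | "p = 2" "mu l ! p = 2*l + 4"
  | t where "t + 2 \<le> l" "p = 2*t + 3" "mu l ! p + 2*t = 2*l"
  | t where "t + 1 \<le> l" "p = 2*t + 4" "mu l ! p + 2*t = 2*l + 3"
  | "p = 2*l + 1" "mu l ! p = 1"
  | "p = 2*l + 3" "mu l ! p = 3"
  | "p = 2*l + 4" "mu l ! p = 2"
proof -
  consider "p < 3" | "3 \<le> p" "p < 2*l + 1" | "2*l + 1 \<le> p"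
    by linarith
  then show thesis
  proof cases
    case 1
    then have "p = 0 \<or> p = 1 \<or> p = 2" by auto
    then show thesis using that(1-3) by (auto simp: mu_def)
  next
    case 2
    define t where "t = (p - 3) div 2"
    have "t + 2 \<le> l" "p = 2*t + 3 \<or> p = 2*t + 4"
      using 2 unfolding t_def by presburger+
    then show thesis
      using that(4,5) mu_nth_middle[of t l] by auto
  next
    case 3
    then consider "p = 2*l + 1" | "p = 2*l + 2" | "p = 2*l + 3" | "p = 2*l + 4"
      using assms(2) by linarith
    then show thesis
    proof cases
      case 2
      show thesis by (rule that(5)[of "l - 1"]) (use assms(1) 2 mu_nth_tail in auto)
    qed (use that(6-8) mu_nth_tail[OF assms(1)] in auto)
  qed
qed

definition mu_succs :: "nat \<Rightarrow> nat \<Rightarrow> nat set" where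
  "mu_succs l p =
     (if p = 0 then {1, 2, 4}
      else if p = 2*l + 1 then {2*l + 2, 2*l + 3, 2*l + 4}
      else if odd p \<and> 3 \<le> p \<and> p < 2*l then {p + 1, p + 3}
      else {})"

lemma mu_succsE:
  assumes "q \<in> mu_succs l p"
  obtains "p = 0" "q \<in> {1, 2, 4}"
  | t where "t + 2 \<le> l" "p = 2*t + 3" "q \<in> {2*t + 4, 2*t + 6}"
  | "p = 2*l + 1" "q \<in> {2*l + 2, 2*l + 3, 2*l + 4}"
proof -
  consider "p = 0" | "p = 2*l + 1" | "odd p" "3 \<le> p" "p < 2*l" "p \<noteq> 0" "p \<noteq> 2*l + 1"
    using assms unfolding mu_succs_def by (auto split: if_splits)
  then show thesis
  proof cases
    case 3
    define t where "t = (p - 3) div 2"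
    have "p = 2*t + 3" "t + 2 \<le> l" using 3 unfolding t_def by presburger+
    then show thesis using that(2) assms 3 unfolding mu_succs_def by auto
  qed (use assms that in \<open>auto simp: mu_succs_def\<close>)
qed

lemma mu_three_succs_endpoint:
  assumes "x \<in> mu_succs l a" "y \<in> mu_succs l a" "z \<in> mu_succs l a" "x < y" "y < z"
  shows "a = 0 \<or> a = 2*l + 1"
  using assms unfolding mu_succs_def by (auto split: if_splits)

lemma mu_no_four_succs:
  assumes "w \<in> mu_succs l a" "x \<in> mu_succs l a" "y \<in> mu_succs l a" "z \<in> mu_succs l a"
    "w < x" "x < y" "y < z"
  shows False
  using assms unfolding mu_succs_def by (auto split: if_splits)

lemma mu_succs_of_succ_empty:
  assumes "1 \<le> l" "q \<in> mu_succs l p"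
  shows "mu_succs l q = {}"
  using assms(2) by (elim mu_succsE) (use assms(1) in \<open>auto simp: mu_succs_def; presburger\<close>)+

lemma mu_common_succ:
  assumes "1 \<le> l" "q \<in> mu_succs l p" "q \<in> mu_succs l p'" "p < p'"
  shows "q = p' + 1"
  using assms by (elim mu_succsE; auto; presburger)

lemma mu_succs_bounds:
  assumes "1 \<le> l" "q \<in> mu_succs l p"
  shows "p < q" "q < 2*l + 5"
  using assms(2) by (elim mu_succsE; use assms(1) in auto)+

lemma noninversion_mu_iff:
  assumes "1 \<le> l"
  shows "noninversion (mu l) p q \<longleftrightarrow> q \<in> mu_succs l p"
proof
  assume "noninversion (mu l) p q"
  then have pq: "p < q" "q < 2*l + 5" "mu l ! p < mu l ! q"
    unfolding noninversion_def length_mu[OF assms] by auto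
  then have p: "p < 2*l + 5" by simp
  with pq assms show "q \<in> mu_succs l p"
    by (cases rule: mu_nth_cases[OF assms p]; cases rule: mu_nth_cases[OF assms pq(2)])
      (auto simp: mu_succs_def; presburger)+
next
  assume q: "q \<in> mu_succs l p"
  then have pq: "p < q" "q < 2*l + 5"
    using mu_succs_bounds[OF assms] by blast+
  then have p: "p < 2*l + 5" by simp
  with pq assms q have "mu l ! p < mu l ! q"
    by (cases rule: mu_nth_cases[OF assms p]; cases rule: mu_nth_cases[OF assms pq(2)];
      auto simp: mu_succs_def split: if_splits; presburger)
  with pq show "noninversion (mu l) p q"
    unfolding noninversion_def length_mu[OF assms] by simp
qed

(* Graph distance from position 0 in the noninversion graph of mu l. *)
definition mu_dist :: "nat \<Rightarrow> nat \<Rightarrow> int" where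
  "mu_dist l p =
     (if p = 0 then 0 else if p \<le> 2 then 1 else if 2*l + 3 \<le> p then 2 * int l + 1
      else if odd p then int p - 1 else int p - 3)"

lemma mu_dist_succ:
  assumes "1 \<le> l" "q \<in> mu_succs l p"
  shows "\<bar>mu_dist l q - mu_dist l p\<bar> \<le> 1"
  using assms(2) by (elim mu_succsE) (use assms(1) in \<open>auto simp: mu_dist_def\<close>)

(* The path 0, 4, 3, 6, 5, ..., 2k+2, 2k+1 in the noninversion graph of mu k. *)
definition zigzag :: "nat \<Rightarrow> nat" where
  "zigzag i = (if i = 0 then 0 else if odd i then i + 3 else i + 1)"

lemma zigzag_adjacent:
  assumes "i < 2*k"
  shows "zigzag (Suc i) \<in> mu_succs k (zigzag i) \<or> zigzag i \<in> mu_succs k (zigzag (Suc i))"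
  using assms unfolding zigzag_def mu_succs_def by (auto; presburger)

lemma contains_mu_succs_map:
  assumes "p \<prec> mu l" "1 \<le> l"
  obtains g where "strict_mono_on {..<length p} g"
    and "\<And>i j. noninversion p i j \<Longrightarrow> g j \<in> mu_succs l (g i)"
  using contains_noninversion_map[OF assms(1)] noninversion_mu_iff[OF assms(2)] by metis

lemma mu_avoids_123:
  assumes "1 \<le> l"
  shows "\<not> [1, 2, 3] \<prec> mu l"
proof
  assume "[1, 2, 3] \<prec> mu l"
  then obtain g where "\<And>i j. noninversion [1, 2, 3] i j \<Longrightarrow> g j \<in> mu_succs l (g i)"
    using assms by (rule contains_mu_succs_map) (rule that)
  then have "g 1 \<in> mu_succs l (g 0)" "g 2 \<in> mu_succs l (g 1)"
    by (simp_all add: noninversion_def)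
  with mu_succs_of_succ_empty[OF assms] show False by blast
qed

lemma mu_avoids_3214:
  assumes "1 \<le> l"
  shows "\<not> [3, 2, 1, 4] \<prec> mu l"
proof
  assume "[3, 2, 1, 4] \<prec> mu l"
  then obtain g where mono: "strict_mono_on {..<length [3, 2, 1, 4 :: nat]} g"
    and succ: "\<And>i j. noninversion [3, 2, 1, 4] i j \<Longrightarrow> g j \<in> mu_succs l (g i)"
    using assms by (rule contains_mu_succs_map) (rule that)
  have less: "g 0 < g 1" "g 0 < g 2" "g 1 < g 2"
    by (simp_all add: strict_mono_onD[OF mono])
  have "g 3 \<in> mu_succs l (g 0)" "g 3 \<in> mu_succs l (g 1)" "g 3 \<in> mu_succs l (g 2)"
    by (simp_all add: succ noninversion_def)
  then have "g 3 = g 1 + 1" "g 3 = g 2 + 1"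
    using mu_common_succ[OF assms] less by blast+
  with less show False by simp
qed

lemma mu_avoids_2143:
  assumes "1 \<le> l"
  shows "\<not> [2, 1, 4, 3] \<prec> mu l"
proof
  assume "[2, 1, 4, 3] \<prec> mu l"
  then obtain g where mono: "strict_mono_on {..<length [2, 1, 4, 3 :: nat]} g"
    and succ: "\<And>i j. noninversion [2, 1, 4, 3] i j \<Longrightarrow> g j \<in> mu_succs l (g i)"
    using assms by (rule contains_mu_succs_map) (rule that)
  have less: "g 0 < g 1" "g 2 < g 3"
    by (simp_all add: strict_mono_onD[OF mono])
  have "g 2 \<in> mu_succs l (g 0)" "g 2 \<in> mu_succs l (g 1)"
    "g 3 \<in> mu_succs l (g 0)" "g 3 \<in> mu_succs l (g 1)"
    by (simp_all add: succ noninversion_def)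
  then have "g 2 = g 1 + 1" "g 3 = g 1 + 1"
    using mu_common_succ[OF assms] less(1) by blast+
  with less show False by simp
qed

lemma mu_avoids_15432:
  assumes "1 \<le> l"
  shows "\<not> [1, 5, 4, 3, 2] \<prec> mu l"
proof
  assume "[1, 5, 4, 3, 2] \<prec> mu l"
  then obtain g where mono: "strict_mono_on {..<length [1, 5, 4, 3, 2 :: nat]} g"
    and succ: "\<And>i j. noninversion [1, 5, 4, 3, 2] i j \<Longrightarrow> g j \<in> mu_succs l (g i)"
    using assms by (rule contains_mu_succs_map) (rule that)
  have "g 1 < g 2" "g 2 < g 3" "g 3 < g 4"
    by (simp_all add: strict_mono_onD[OF mono])
  moreover have "g 1 \<in> mu_succs l (g 0)" "g 2 \<in> mu_succs l (g 0)"
    "g 3 \<in> mu_succs l (g 0)" "g 4 \<in> mu_succs l (g 0)"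
    by (simp_all add: succ noninversion_def)
  ultimately show False
    by (intro mu_no_four_succs)
qed

lemma mu_succs_map_ends:
  assumes mono: "strict_mono_on {..<2*k + 5} g"
    and hom: "\<And>i j. j \<in> mu_succs k i \<Longrightarrow> g j \<in> mu_succs l (g i)"
  shows "g 0 = 0" "g (2*k + 1) = 2*l + 1"
proof -
  have less: "g i < g j" if "i < j" "j < 2*k + 5" for i j
    using that by (intro strict_mono_onD[OF mono]) auto
  have first: "1 \<in> mu_succs k 0" "2 \<in> mu_succs k 0" "4 \<in> mu_succs k 0"
    and last: "2*k + 2 \<in> mu_succs k (2*k + 1)" "2*k + 3 \<in> mu_succs k (2*k + 1)"
      "2*k + 4 \<in> mu_succs k (2*k + 1)"
    by (simp_all add: mu_succs_def)
  have "g 0 = 0 \<or> g 0 = 2*l + 1"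
    using mu_three_succs_endpoint[OF hom[OF first(1)] hom[OF first(2)] hom[OF first(3)]] less by simp
  moreover have "g (2*k + 1) = 0 \<or> g (2*k + 1) = 2*l + 1"
    using mu_three_succs_endpoint[OF hom[OF last(1)] hom[OF last(2)] hom[OF last(3)]] less by simp
  moreover have "g 0 < g (2*k + 1)"
    by (simp add: less)
  ultimately show "g 0 = 0" "g (2*k + 1) = 2*l + 1"
    by auto
qed

lemma mu_not_contains_longer_mu:
  assumes "1 \<le> k" "k < l"
  shows "\<not> mu k \<prec> mu l"
proof
  assume "mu k \<prec> mu l"
  have l: "1 \<le> l" using assms by simp
  from contains_mu_succs_map[OF \<open>mu k \<prec> mu l\<close> l]
  obtain g where mono: "strict_mono_on {..<2*k + 5} g"
    and hom: "\<And>i j. j \<in> mu_succs k i \<Longrightarrow> g j \<in> mu_succs l (g i)"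
    unfolding noninversion_mu_iff[OF assms(1)] length_mu[OF assms(1)] by blast
  have "\<bar>mu_dist l (g (zigzag (2*k))) - mu_dist l (g (zigzag 0))\<bar> \<le> of_nat (2*k)"
  proof (rule abs_diff_le_of_steps)
    fix i assume "i < 2*k"
    from zigzag_adjacent[OF this]
    show "\<bar>mu_dist l (g (zigzag (Suc i))) - mu_dist l (g (zigzag i))\<bar> \<le> 1"
    proof
      assume "zigzag (Suc i) \<in> mu_succs k (zigzag i)"
      then show ?thesis by (rule mu_dist_succ[OF l hom])
    next
      assume "zigzag i \<in> mu_succs k (zigzag (Suc i))"
      then show ?thesis using mu_dist_succ[OF l hom] by (simp add: abs_minus_commute)
    qed
  qed
  moreover have "zigzag 0 = 0" "zigzag (2*k) = 2*k + 1"
    using assms(1) by (simp_all add: zigzag_def)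
  ultimately show False
    using mu_succs_map_ends[OF mono hom] assms(2) by (simp add: mu_dist_def)
qed

lemma antichain_small_patterns: "antichain {[1, 2, 3], [3, 2, 1, 4], [2, 1, 4, 3], [1, 5, 4, 3, 2]}"
  unfolding antichain_def contains_iff_subseqs order_iso_iff_list_all by (simp add: upt_rec)

lemma antichain_mu: "antichain {mu k | k. k \<ge> 1}"
  unfolding antichain_def
proof clarify
  fix k l assume kl: "1 \<le> k" "1 \<le> l" "mu k \<noteq> mu l" "mu k \<prec> mu l"
  then have "k \<le> l" "k \<noteq> l"
    using contains_length_le[OF kl(4)] length_mu[OF kl(1)] length_mu[OF kl(2)] by auto
  with kl show False
    using mu_not_contains_longer_mu by simp
qed

lemma small_pattern_incomparable_mu:
  assumes "1 \<le> l" "p \<in> {[1, 2, 3], [3, 2, 1, 4], [2, 1, 4, 3], [1, 5, 4, 3, 2]}"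
  shows "\<not> p \<prec> mu l \<and> \<not> mu l \<prec> p"
proof
  show "\<not> p \<prec> mu l"
    using assms(2) mu_avoids_123[OF assms(1)] mu_avoids_3214[OF assms(1)]
      mu_avoids_2143[OF assms(1)] mu_avoids_15432[OF assms(1)] by auto
  show "\<not> mu l \<prec> p"
  proof
    assume "mu l \<prec> p"
    then have "2*l + 5 \<le> length p"
      using contains_length_le length_mu[OF assms(1)] by metis
    with assms show False by auto
  qed
qed

theorem mainTheorem9:
  shows "antichain {mu k | k. k \<ge> 1} \<and>
         antichain ({[1,2,3], [3,2,1,4], [2,1,4,3], [1,5,4,3,2]} \<union> {mu k | k. k \<ge> 1})"
proof
  show "antichain {mu k | k. k \<ge> 1}"
    by (rule antichain_mu)
  show "antichain ({[1,2,3], [3,2,1,4], [2,1,4,3], [1,5,4,3,2]} \<union> {mu k | k. k \<ge> 1})"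
  proof (rule antichain_Un[OF antichain_small_patterns antichain_mu])
    fix p r :: "nat list" assume "p \<in> {[1, 2, 3], [3, 2, 1, 4], [2, 1, 4, 3], [1, 5, 4, 3, 2]}"
      and "r \<in> {mu k | k. k \<ge> 1}"
    then show "\<not> p \<prec> r \<and> \<not> r \<prec> p"
      using small_pattern_incomparable_mu by blast
  qed
qed

end
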